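(* Let $m\ge 1$ and $d_k\ge 1$ be integers, let $u\in\mathbb{R}^m$ with $\|u\|=1$, and let $g_1,\ldots,g_{d_k}\in\mathbb{R}^m$ be nonzero vectors such that no $g_i$ is colinear with $u$. Consider the problem $$\min_{V_1,\ldots,V_{d_k}\in\mathbb{R}^m}\ \sum_{i=1}^{d_k} V_i^T g_i \quad\text{subject to}\quad u^T\Big(\sum_{j=1}^{d_k} V_j\Big)=2-d_k,\qquad \|V_i\|=1\ \ (i=1,\ldots,d_k).$$ Let $\phi_i$ denote the angle between $g_i$ and $u$ (so $\cos\phi_i = g_i^Tu/\|g_i\|$). Then the Lagrangian dual function of this problem, obtained by dualizing the linear constraint $u^T\sum_j V_j = 2-d_k$ with a multiplier $\lambda\in\mathbb{R}$ (the norm constraints being kept), is $$h(\lambda) = -\sum_{i=1}^{d_k}\sqrt{\|g_i\|^2 + 2\lambda\|g_i\|\cos(\phi_i)+\lambda^2} + (d_k-2)\lambda .$$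
   Context: The Lagrangian used is $L(\lambda,V)=\sum_i V_i^Tg_i+\lambda\big(u^T\sum_j V_j + d_k-2\big)$ and the dual function is its minimum over the unit-norm vectors $V_i$. This problem is the block subproblem for one discrete variable $x_k$ with $d_k$ values in a low-rank SDP relaxation of a pairwise graphical model; $u$ plays the role of the fixed last row $V_{d+1}$ of the low-rank factor. $\|\cdot\|$ is the Euclidean norm. *)

theory Defs
  imports "HOL-Analysis.Analysis"
begin

text \<open>Block subproblem: d unit vectors V 1, ..., V d in the Euclidean space 'a (of dimension
  m = DIM('a)), data vectors g 1, ..., g d and a unit vector u.\<close>

definition lagrangian :: "nat \<Rightarrow> (nat \<Rightarrow> 'a::euclidean_space) \<Rightarrow> 'a \<Rightarrow> real \<Rightarrow> (nat \<Rightarrow> 'a) \<Rightarrow> real" where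
  "lagrangian d g u lam V =
     (\<Sum>i=1..d. V i \<bullet> g i) + lam * (u \<bullet> (\<Sum>j=1..d. V j) + real d - 2)"

definition dual_fun :: "nat \<Rightarrow> (nat \<Rightarrow> 'a::euclidean_space) \<Rightarrow> 'a \<Rightarrow> real \<Rightarrow> real" where
  "dual_fun d g u lam = (INF V \<in> {V. \<forall>i\<in>{1..d}. norm (V i) = 1}. lagrangian d g u lam V)"

definition cos_angle :: "'a::euclidean_space \<Rightarrow> 'a \<Rightarrow> real" where
  "cos_angle x y = (x \<bullet> y) / (norm x * norm y)"

end

theory Submission
  imports Defs
begin

text \<open>Completing the multiplier into the data, the Lagrangian becomes
  \<open>\<Sum>i. V i \<bullet> (g i + \<lambda> u) + (d - 2) \<lambda>\<close>, which separates over the unit vectors \<open>V i\<close>.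
  By Cauchy-Schwarz each term is minimised by \<open>V i = - sgn (g i + \<lambda> u)\<close> with value
  \<open>- \<parallel>g i + \<lambda> u\<parallel>\<close>, and expanding this norm with \<open>\<parallel>u\<parallel> = 1\<close> gives the square roots.\<close>

lemma lagrangian_eq_shifted:
  "lagrangian d g u lam V = (\<Sum>i=1..d. V i \<bullet> (g i + lam *\<^sub>R u)) + (real d - 2) * lam"
proof -
  have "u \<bullet> (\<Sum>j=1..d. V j) = (\<Sum>j=1..d. V j \<bullet> u)"
    by (simp add: inner_sum_right inner_commute)
  then show ?thesis
    unfolding lagrangian_def
    by (simp add: inner_add_right sum.distrib sum_distrib_left algebra_simps)
qed

lemma sum_inner_unit_family_ge:
  fixes V w :: "'i \<Rightarrow> 'a::real_inner"
  assumes "\<forall>i\<in>I. norm (V i) = 1"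
  shows "- (\<Sum>i\<in>I. norm (w i)) \<le> (\<Sum>i\<in>I. V i \<bullet> w i)"
proof -
  have "- norm (w i) \<le> V i \<bullet> w i" if "i \<in> I" for i
    using Cauchy_Schwarz_ineq2[of "V i" "w i"] assms that by auto
  then show ?thesis
    by (simp add: sum_negf[symmetric] sum_mono)
qed

lemma sum_inner_unit_family_attains:
  fixes w :: "'i \<Rightarrow> 'a::euclidean_space"
  obtains V where "\<forall>i. norm (V i) = 1" and "(\<Sum>i\<in>I. V i \<bullet> w i) = - (\<Sum>i\<in>I. norm (w i))"
proof -
  obtain e :: 'a where e: "e \<in> Basis"
    using nonempty_Basis by blast
  define V where "V i = (if w i = 0 then e else - sgn (w i))" for i
  have "norm (V i) = 1" for i
    using e by (simp add: V_def norm_sgn)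
  moreover have "V i \<bullet> w i = - norm (w i)" for i
    by (simp add: V_def sgn_div_norm power2_norm_eq_inner[symmetric] power2_eq_square)
  ultimately show ?thesis
    by (intro that[of V]) (simp_all add: sum_negf)
qed

text \<open>No hypothesis \<open>x \<noteq> 0\<close> is needed: for \<open>x = 0\<close> both sides vanish, since \<open>0 / 0 = 0\<close>.\<close>

lemma norm_mult_cos_angle_unit:
  assumes "norm u = 1"
  shows "norm x * cos_angle x u = x \<bullet> u"
  using assms by (simp add: cos_angle_def)

lemma norm_add_scaleR_unit:
  fixes x u :: "'a::euclidean_space"
  assumes "norm u = 1"
  shows "norm (x + t *\<^sub>R u) = sqrt ((norm x)\<^sup>2 + 2 * t * norm x * cos_angle x u + t\<^sup>2)"
proof -
  have "(norm (x + t *\<^sub>R u))\<^sup>2 = (norm x)\<^sup>2 + 2 * t * (x \<bullet> u) + t\<^sup>2 * (norm u)\<^sup>2"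
    unfolding power2_norm_eq_inner
    by (simp add: inner_add_left inner_add_right inner_commute power2_eq_square algebra_simps)
  also have "\<dots> = (norm x)\<^sup>2 + 2 * t * norm x * cos_angle x u + t\<^sup>2"
    using assms by (simp add: norm_mult_cos_angle_unit mult.assoc)
  finally show ?thesis
    by (simp add: real_sqrt_unique)
qed

theorem theorem3:
  fixes d :: nat and u :: "'a::euclidean_space" and g :: "nat \<Rightarrow> 'a"
  assumes "d \<ge> 1"
    and "norm u = 1"
    and "\<And>i. i \<in> {1..d} \<Longrightarrow> g i \<noteq> 0"
    and "\<And>i. i \<in> {1..d} \<Longrightarrow> \<not> collinear {0, g i, u}"
  shows "dual_fun d g u lam =
           - (\<Sum>i=1..d. sqrt ((norm (g i))\<^sup>2 + 2 * lam * norm (g i) * cos_angle (g i) u + lam\<^sup>2))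
           + (real d - 2) * lam"
proof -
  define w where "w i = g i + lam *\<^sub>R u" for i
  let ?L = "\<lambda>V. (\<Sum>i=1..d. V i \<bullet> w i) + (real d - 2) * lam"
  have "dual_fun d g u lam = (INF V \<in> {V. \<forall>i\<in>{1..d}. norm (V i) = 1}. ?L V)"
    unfolding dual_fun_def lagrangian_eq_shifted w_def ..
  also have "\<dots> = - (\<Sum>i=1..d. norm (w i)) + (real d - 2) * lam"
  proof (rule cInf_eq_minimum)
    obtain V where "\<forall>i. norm (V i) = 1" and "(\<Sum>i=1..d. V i \<bullet> w i) = - (\<Sum>i=1..d. norm (w i))"
      by (rule sum_inner_unit_family_attains)
    then show "- (\<Sum>i=1..d. norm (w i)) + (real d - 2) * lam
        \<in> ?L ` {V. \<forall>i\<in>{1..d}. norm (V i) = 1}"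
      by (intro image_eqI[of _ _ V]) auto
  qed (auto dest: sum_inner_unit_family_ge[where w = w])
  finally show ?thesis
    using assms(2) by (simp add: w_def norm_add_scaleR_unit)
qed

end
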